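(* Let $\sigma$ be the substitution on $\{0,1\}$ given by $\sigma(0)=01$, $\sigma(1)=00$, let $X_\sigma\subset\{0,1\}^{\mathbb Z}$ be its subshift with shift map $S$, and let $T:X_\sigma\times\mathbb Z_3\to X_\sigma\times\mathbb Z_3$ be $T(x,z)=(Sx,z+1)$. Then the system $(X_\sigma\times\mathbb Z_3,T)$ is neither expansive nor equicontinuous.
   Context: $X_\sigma$ is the set of bi-infinite sequences over $\{0,1\}$ all of whose finite subwords are subwords of $\sigma^k(a)$ for some $a\in\{0,1\}$, $k\ge1$ (with $\sigma$ extended to words by concatenation); $S(x)_i=x_{i+1}$. $\mathbb Z_3$ is the ring of $3$-adic integers. $T$ is expansive if there is $\delta>0$ such that distinct points are separated by more than $\delta$ along some iterate; equicontinuous if the family $\{T^n\}_{n\in\mathbb Z}$ is equicontinuous. *)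

theory Defs
  imports Complex_Main "HOL-Library.Sublist"
begin

definition sigma :: "nat \<Rightarrow> nat list" where
  "sigma a = (if a = 0 then [0, 1] else [0, 0])"

definition sigma_word :: "nat list \<Rightarrow> nat list" where
  "sigma_word w = concat (map sigma w)"

definition lang_sigma :: "nat list set" where
  "lang_sigma = {w. \<exists>a\<in>{0,1}. \<exists>k\<ge>1. sublist w ((sigma_word ^^ k) [a])}"

definition subword :: "(int \<Rightarrow> nat) \<Rightarrow> int \<Rightarrow> nat \<Rightarrow> nat list" where
  "subword x i n = map (\<lambda>j. x (i + int j)) [0..<n]"

definition X_sigma :: "(int \<Rightarrow> nat) set" where
  "X_sigma = {x. (\<forall>i. x i \<in> {0,1}) \<and> (\<forall>i n. subword x i n \<in> lang_sigma)}"

definition shift :: "(int \<Rightarrow> nat) \<Rightarrow> (int \<Rightarrow> nat)" where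
  "shift x = (\<lambda>i. x (i + 1))"

definition shift_inv :: "(int \<Rightarrow> nat) \<Rightarrow> (int \<Rightarrow> nat)" where
  "shift_inv x = (\<lambda>i. x (i - 1))"

definition dist_seq :: "(int \<Rightarrow> nat) \<Rightarrow> (int \<Rightarrow> nat) \<Rightarrow> real" where
  "dist_seq x y = (if x = y then 0 else
     (1/2) ^ (LEAST n::nat. x (int n) \<noteq> y (int n) \<or> x (- int n) \<noteq> y (- int n)))"

section \<open>3-adic integers as the inverse limit of Z/3^n Z\<close>

definition Z3 :: "(nat \<Rightarrow> int) set" where
  "Z3 = {z. \<forall>n. z n \<in> {0..<3 ^ n} \<and> z n = z (Suc n) mod 3 ^ n}"

definition z3_plus1 :: "(nat \<Rightarrow> int) \<Rightarrow> (nat \<Rightarrow> int)" where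
  "z3_plus1 z = (\<lambda>n. (z n + 1) mod 3 ^ n)"

definition z3_minus1 :: "(nat \<Rightarrow> int) \<Rightarrow> (nat \<Rightarrow> int)" where
  "z3_minus1 z = (\<lambda>n. (z n - 1) mod 3 ^ n)"

text \<open>3-adic metric: |z - w|_3 = 3^(-v) where v is the largest n with z = w mod 3^n.\<close>
definition dist_Z3 :: "(nat \<Rightarrow> int) \<Rightarrow> (nat \<Rightarrow> int) \<Rightarrow> real" where
  "dist_Z3 z w = (if z = w then 0 else (1/3) ^ ((LEAST n. z n \<noteq> w n) - 1))"

definition Xprod :: "((int \<Rightarrow> nat) \<times> (nat \<Rightarrow> int)) set" where
  "Xprod = X_sigma \<times> Z3"

definition dist_prod :: "((int \<Rightarrow> nat) \<times> (nat \<Rightarrow> int)) \<Rightarrow> ((int \<Rightarrow> nat) \<times> (nat \<Rightarrow> int)) \<Rightarrow> real" where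
  "dist_prod p q = max (dist_seq (fst p) (fst q)) (dist_Z3 (snd p) (snd q))"

definition Tmap :: "((int \<Rightarrow> nat) \<times> (nat \<Rightarrow> int)) \<Rightarrow> ((int \<Rightarrow> nat) \<times> (nat \<Rightarrow> int))" where
  "Tmap p = (shift (fst p), z3_plus1 (snd p))"

definition Tinv :: "((int \<Rightarrow> nat) \<times> (nat \<Rightarrow> int)) \<Rightarrow> ((int \<Rightarrow> nat) \<times> (nat \<Rightarrow> int))" where
  "Tinv p = (shift_inv (fst p), z3_minus1 (snd p))"

definition Tpow :: "int \<Rightarrow> ((int \<Rightarrow> nat) \<times> (nat \<Rightarrow> int)) \<Rightarrow> ((int \<Rightarrow> nat) \<times> (nat \<Rightarrow> int))" where
  "Tpow n = (if n \<ge> 0 then Tmap ^^ nat n else Tinv ^^ nat (- n))"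

definition expansive :: "'a set \<Rightarrow> ('a \<Rightarrow> 'a \<Rightarrow> real) \<Rightarrow> (int \<Rightarrow> 'a \<Rightarrow> 'a) \<Rightarrow> bool" where
  "expansive X d f \<longleftrightarrow> (\<exists>\<delta>>0. \<forall>p\<in>X. \<forall>q\<in>X. p \<noteq> q \<longrightarrow> (\<exists>n. d (f n p) (f n q) > \<delta>))"

definition equicontinuous :: "'a set \<Rightarrow> ('a \<Rightarrow> 'a \<Rightarrow> real) \<Rightarrow> (int \<Rightarrow> 'a \<Rightarrow> 'a) \<Rightarrow> bool" where
  "equicontinuous X d f \<longleftrightarrow> (\<forall>p\<in>X. \<forall>\<epsilon>>0. \<exists>\<delta>>0. \<forall>q\<in>X. d p q < \<delta> \<longrightarrow> (\<forall>n. d (f n p) (f n q) < \<epsilon>))"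

end

theory Submission
  imports Defs
begin

text \<open>The one-sided fixed point of \<open>\<sigma>\<close> starting with 0 is the period-doubling sequence,
  which extends to a sequence \<open>pd\<close> on the nonzero integers with \<open>pd (i + 2^K) = pd i\<close> for
  \<open>0 < \<bar>i\<bar> < 2^K\<close> and \<open>pd (2^K) = K mod 2\<close>. Filling the position 0 with either symbol therefore
  gives two points of \<open>X\<^sub>\<sigma>\<close>, and translating them shows that \<open>X\<^sub>\<sigma>\<close> contains pairs that agree
  on an arbitrarily long window around 0 but disagree just outside it: some iterate moves the
  disagreement to position 0, so \<open>T\<close> is not equicontinuous. On the other hand \<open>z \<mapsto> z + 1\<close> is an
  isometry of \<open>\<int>\<^sub>3\<close>, so the points \<open>(x, 0)\<close> and \<open>(x, 3^N)\<close> stay within \<open>3^-N\<close> forever and \<open>T\<close> is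
  not expansive.\<close>

function pd :: "int \<Rightarrow> nat" where
  "pd i = (if i = 0 \<or> odd i then 0 else 1 - pd (i div 2))"
  by pat_completeness auto
termination
  by (relation "measure (\<lambda>i. nat \<bar>i\<bar>)") auto

declare pd.simps[simp del]

lemma pd_odd: "odd i \<Longrightarrow> pd i = 0"
  by (subst pd.simps) auto

lemma pd_double: "m \<noteq> 0 \<Longrightarrow> pd (2 * m) = 1 - pd m"
  by (subst pd.simps) auto

lemma pd_in_01: "pd i \<in> {0, 1}"
proof (induction i rule: pd.induct)
  case (1 i)
  then show ?case by (subst pd.simps) auto
qed

lemma pd_add_pow2: "i \<noteq> 0 \<Longrightarrow> \<bar>i\<bar> < 2 ^ K \<Longrightarrow> pd (i + 2 ^ K) = pd i"
proof (induction K arbitrary: i)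
  case 0
  then show ?case by auto
next
  case (Suc K)
  show ?case
  proof (cases "odd i")
    case True
    then show ?thesis by (simp add: pd_odd)
  next
    case False
    then obtain j where j: "i = 2 * j" by (auto elim: evenE)
    have "j \<noteq> 0" and "\<bar>j\<bar> < 2 ^ K" using Suc.prems j by auto
    then have "pd (2 * (j + 2 ^ K)) = 1 - pd j"
      using Suc.IH pd_double[of "j + 2 ^ K"] by auto
    then show ?thesis using j \<open>j \<noteq> 0\<close> pd_double by simp
  qed
qed

lemma pd_pow2: "pd (2 ^ K) = K mod 2"
  by (induction K) (auto simp: pd_odd pd_double[of "2 ^ _", simplified] mod_Suc)

lemma pd_uminus: "pd (- i) = pd i"
proof (induction i rule: pd.induct)
  case (1 i)
  show ?case
  proof (cases "i = 0 \<or> odd i")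
    case True
    then show ?thesis by (auto simp: pd_odd)
  next
    case False
    then obtain j where j: "i = 2 * j" "j \<noteq> 0" by (auto elim: evenE)
    then have "pd (- j) = pd j" using 1 False by auto
    then show ?thesis using j pd_double[of "- j"] pd_double[of j] by simp
  qed
qed

lemma sigma_word_append: "sigma_word (xs @ ys) = sigma_word xs @ sigma_word ys"
  unfolding sigma_word_def by simp

lemma sigma_word_map_upt:
  assumes "\<And>n. f n \<in> {0, 1}"
  shows "sigma_word (map f [0..<m]) = map (\<lambda>n. if even n then 0 else 1 - f (n div 2)) [0..<2 * m]"
proof (induction m)
  case 0
  then show ?case by (simp add: sigma_word_def)
next
  case (Suc m)
  have "[0..<2 * Suc m] = [0..<2 * m] @ [2 * m, 2 * m + 1]" by simp
  moreover have "sigma (f m) = [0, 1 - f m]" using assms[of m] by (auto simp: sigma_def)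
  ultimately show ?case using Suc by (simp add: sigma_word_append) (simp add: sigma_word_def)
qed

lemma sigma_word_funpow_zero: "(sigma_word ^^ k) [0] = map (\<lambda>n. pd (int n + 1)) [0..<2 ^ k]"
proof (induction k)
  case 0
  then show ?case by (simp add: pd_odd)
next
  case (Suc k)
  have "(sigma_word ^^ Suc k) [0] = sigma_word (map (\<lambda>n. pd (int n + 1)) [0..<2 ^ k])"
    using Suc by simp
  also have "\<dots> = map (\<lambda>n. if even n then 0 else 1 - pd (int (n div 2) + 1)) [0..<2 * 2 ^ k]"
    by (rule sigma_word_map_upt) (rule pd_in_01)
  also have "\<dots> = map (\<lambda>n. pd (int n + 1)) [0..<2 ^ Suc k]"
  proof (rule map_cong)
    fix n
    show "(if even n then 0 else 1 - pd (int (n div 2) + 1)) = pd (int n + 1)"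
    proof (cases "even n")
      case True
      then show ?thesis by (simp add: pd_odd)
    next
      case False
      then obtain q where q: "n = 2 * q + 1" by (auto elim: oddE)
      then have "int n + 1 = 2 * (int q + 1)" by simp
      then have "pd (int n + 1) = 1 - pd (int q + 1)" by (simp only:) (rule pd_double, simp)
      then show ?thesis using q by simp
    qed
  qed simp
  finally show ?case .
qed

lemma sublist_map_upt: "s + n \<le> M \<Longrightarrow> sublist (map f [s..<s + n]) (map f [0..<M])"
proof -
  assume "s + n \<le> M"
  then have "[0..<M] = [0..<s + n] @ [s + n..<M]"
    using upt_add_eq_append[of 0 "s + n" "M - (s + n)"] by simp
  then have "[0..<M] = [0..<s] @ [s..<s + n] @ [s + n..<M]"
    using upt_add_eq_append[of 0 s n] by simp
  then show ?thesis unfolding sublist_def by (metis map_append)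
qed

lemma subword_pd_in_lang_sigma:
  assumes "i > 0"
  shows "subword pd i n \<in> lang_sigma"
proof -
  define s where "s = nat i - 1"
  define k where "k = Suc (s + n)"
  have "subword pd i n = map (\<lambda>n. pd (int n + 1)) [s..<s + n]"
    using assms unfolding subword_def s_def by (intro nth_equalityI) (auto simp: add_ac)
  moreover have "s + n \<le> 2 ^ k"
    unfolding k_def power_Suc using less_exp[of "s + n"] by linarith
  ultimately have "sublist (subword pd i n) ((sigma_word ^^ k) [0])"
    by (simp only: sigma_word_funpow_zero sublist_map_upt)
  then show ?thesis unfolding lang_sigma_def k_def by force
qed

text \<open>Position 0 is the one place where the substitution does not determine a symbol:
  filling it with either symbol gives a point of \<open>X\<^sub>\<sigma>\<close>.\<close>
definition pd_filled :: "nat \<Rightarrow> int \<Rightarrow> nat" where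
  "pd_filled b j = (if j = 0 then b else pd j)"

lemma pd_filled_eq_pd_add_pow2:
  "b = K mod 2 \<Longrightarrow> \<bar>j\<bar> < 2 ^ K \<Longrightarrow> pd_filled b j = pd (j + 2 ^ K)"
  by (cases "j = 0") (simp_all add: pd_filled_def pd_pow2 pd_add_pow2)

lemma translate_pd_filled_in_X_sigma:
  assumes b: "b \<in> {0, 1}"
  shows "(\<lambda>i. pd_filled b (i + c)) \<in> X_sigma"
proof -
  have "subword (\<lambda>i. pd_filled b (i + c)) i n \<in> lang_sigma" for i n
  proof -
    define B where "B = nat (\<bar>i\<bar> + \<bar>c\<bar>) + n + 1"
    define K where "K = 2 * B + b"
    have "int B < 2 ^ B" by (metis of_nat_less_two_power)
    also have "(2::int) ^ B \<le> 2 ^ K" unfolding K_def by (intro power_increasing) auto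
    finally have BK: "int B < 2 ^ K" .
    have "K mod 2 = b" using b unfolding K_def by auto
    then have "subword (\<lambda>i. pd_filled b (i + c)) i n = subword pd (i + c + 2 ^ K) n"
      using BK unfolding subword_def B_def
      by (intro map_cong refl, subst pd_filled_eq_pd_add_pow2) (auto simp: add_ac)
    moreover have "i + c + 2 ^ K > 0" using BK unfolding B_def by linarith
    ultimately show ?thesis by (simp add: subword_pd_in_lang_sigma)
  qed
  moreover have "pd_filled b j \<in> {0, 1}" for j
    using b pd_in_01 by (simp add: pd_filled_def)
  ultimately show ?thesis unfolding X_sigma_def by blast
qed

definition z3_of_int :: "int \<Rightarrow> nat \<Rightarrow> int" where
  "z3_of_int m = (\<lambda>n. m mod 3 ^ n)"

lemma z3_of_int_in_Z3: "z3_of_int m \<in> Z3"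
proof -
  have "(3::int) ^ n dvd 3 ^ Suc n" for n
    by (simp add: le_imp_power_dvd)
  then show ?thesis
    unfolding Z3_def z3_of_int_def by (simp add: mod_mod_cancel)
qed

lemma z3_of_int_pow3_eq_0: "n \<le> N \<Longrightarrow> z3_of_int (3 ^ N) n = z3_of_int 0 n"
  unfolding z3_of_int_def by (simp add: le_imp_power_dvd)

lemma z3_of_int_pow3_neq_0: "z3_of_int (3 ^ N) \<noteq> z3_of_int 0"
proof
  assume "z3_of_int (3 ^ N) = z3_of_int 0"
  then have "z3_of_int (3 ^ N) (Suc N) = 0" by (simp add: z3_of_int_def)
  then show False by (simp add: z3_of_int_def)
qed

lemma z3_plus1_funpow_agree:
  "\<forall>n\<le>N. a n = b n \<Longrightarrow> \<forall>n\<le>N. (z3_plus1 ^^ k) a n = (z3_plus1 ^^ k) b n"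
  by (induction k) (auto simp: z3_plus1_def)

lemma z3_minus1_funpow_agree:
  "\<forall>n\<le>N. a n = b n \<Longrightarrow> \<forall>n\<le>N. (z3_minus1 ^^ k) a n = (z3_minus1 ^^ k) b n"
  by (induction k) (auto simp: z3_minus1_def)

lemma dist_Z3_le_if_agree:
  assumes agree: "\<forall>n\<le>N. a n = b n"
  shows "dist_Z3 a b \<le> (1/3) ^ N"
proof (cases "a = b")
  case True
  then show ?thesis by (simp add: dist_Z3_def)
next
  case False
  then obtain m where "a m \<noteq> b m" by auto
  then have "a (LEAST m. a m \<noteq> b m) \<noteq> b (LEAST m. a m \<noteq> b m)" by (rule LeastI)
  then have "\<not> (LEAST m. a m \<noteq> b m) \<le> N" using agree by blast
  then have "N \<le> (LEAST m. a m \<noteq> b m) - 1" by linarith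
  then show ?thesis using False by (simp add: dist_Z3_def power_decreasing)
qed

lemma dist_seq_le_if_agree:
  assumes agree: "\<And>i. \<bar>i\<bar> < int N \<Longrightarrow> x i = y i"
  shows "dist_seq x y \<le> (1/2) ^ N"
proof (cases "x = y")
  case True
  then show ?thesis by (simp add: dist_seq_def)
next
  case False
  let ?Q = "\<lambda>n::nat. x (int n) \<noteq> y (int n) \<or> x (- int n) \<noteq> y (- int n)"
  from False obtain i where "x i \<noteq> y i" by auto
  then have "?Q (nat \<bar>i\<bar>)" by (cases "i \<ge> 0") auto
  then have "?Q (LEAST n. ?Q n)" by (rule LeastI)
  then have "N \<le> (LEAST n. ?Q n)" using agree by force
  then show ?thesis using False by (simp add: dist_seq_def power_decreasing)
qed

lemma dist_seq_eq_1: "x 0 \<noteq> y 0 \<Longrightarrow> dist_seq x y = 1"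
  by (auto simp: dist_seq_def intro!: Least_eq_0)

lemma Tmap_funpow: "(Tmap ^^ k) (x, z) = ((shift ^^ k) x, (z3_plus1 ^^ k) z)"
  by (induction k) (auto simp: Tmap_def)

lemma Tinv_funpow: "(Tinv ^^ k) (x, z) = ((shift_inv ^^ k) x, (z3_minus1 ^^ k) z)"
  by (induction k) (auto simp: Tinv_def)

lemma shift_inv_funpow: "(shift_inv ^^ k) x = (\<lambda>i. x (i - int k))"
  by (induction k arbitrary: x) (auto simp: shift_inv_def algebra_simps)

lemma dist_prod_Tpow_same_fst_le:
  assumes "\<forall>m\<le>N. a m = b m"
  shows "dist_prod (Tpow n (x, a)) (Tpow n (x, b)) \<le> (1/3) ^ N"
proof -
  have "\<forall>m\<le>N. snd (Tpow n (x, a)) m = snd (Tpow n (x, b)) m"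
    using z3_plus1_funpow_agree[OF assms] z3_minus1_funpow_agree[OF assms]
    by (simp add: Tpow_def Tmap_funpow Tinv_funpow)
  moreover have "fst (Tpow n (x, a)) = fst (Tpow n (x, b))"
    by (simp add: Tpow_def Tmap_funpow Tinv_funpow)
  ultimately show ?thesis
    by (simp add: dist_prod_def dist_seq_def dist_Z3_le_if_agree)
qed

lemma not_expansive: "\<not> expansive Xprod dist_prod Tpow"
proof
  assume "expansive Xprod dist_prod Tpow"
  then obtain \<delta> :: real where "\<delta> > 0" and separated:
    "\<forall>p\<in>Xprod. \<forall>q\<in>Xprod. p \<noteq> q \<longrightarrow> (\<exists>n. dist_prod (Tpow n p) (Tpow n q) > \<delta>)"
    unfolding expansive_def by blast
  obtain N where N: "(1/3::real) ^ N < \<delta>" using real_arch_pow_inv[OF \<open>\<delta> > 0\<close>, of "1/3"] by auto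
  define x where "x = pd_filled 0"
  have "x \<in> X_sigma" using translate_pd_filled_in_X_sigma[of 0 0] by (simp add: x_def)
  then have "(x, z3_of_int 0) \<in> Xprod" "(x, z3_of_int (3 ^ N)) \<in> Xprod"
    by (simp_all add: Xprod_def z3_of_int_in_Z3)
  moreover have "(x, z3_of_int 0) \<noteq> (x, z3_of_int (3 ^ N))"
    using z3_of_int_pow3_neq_0[of N] by simp
  ultimately obtain n where "dist_prod (Tpow n (x, z3_of_int 0)) (Tpow n (x, z3_of_int (3 ^ N))) > \<delta>"
    using separated by blast
  moreover have "dist_prod (Tpow n (x, z3_of_int 0)) (Tpow n (x, z3_of_int (3 ^ N))) \<le> (1/3) ^ N"
    by (rule dist_prod_Tpow_same_fst_le) (simp add: z3_of_int_pow3_eq_0)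
  ultimately show False using N by linarith
qed

lemma not_equicontinuous: "\<not> equicontinuous Xprod dist_prod Tpow"
proof
  define x where "x = pd_filled 0"
  define z where "z = z3_of_int 0"
  assume "equicontinuous Xprod dist_prod Tpow"
  moreover have "(x, z) \<in> Xprod"
    using translate_pd_filled_in_X_sigma[of 0 0] z3_of_int_in_Z3 by (simp add: Xprod_def x_def z_def)
  ultimately obtain \<delta> :: real where "\<delta> > 0" and stable:
    "\<forall>q\<in>Xprod. dist_prod (x, z) q < \<delta> \<longrightarrow> (\<forall>n. dist_prod (Tpow n (x, z)) (Tpow n q) < 1)"
    unfolding equicontinuous_def by (meson zero_less_one)
  obtain m where m: "(1/2::real) ^ m < \<delta>" using real_arch_pow_inv[OF \<open>\<delta> > 0\<close>, of "1/2"] by auto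
  define K where "K = 2 * m"
  \<comment> \<open>\<open>K\<close> is even, so \<open>x\<close> and \<open>y\<close> agree on \<open>\<bar>j\<bar> < 2^K\<close> but \<open>x (-2^K) = 0 \<noteq> 1 = y (-2^K)\<close>.\<close>
  define y where "y = (\<lambda>i. pd_filled 1 (i + 2 ^ K))"
  have "(y, z) \<in> Xprod"
    using translate_pd_filled_in_X_sigma[of 1] z3_of_int_in_Z3 by (simp add: Xprod_def y_def z_def)
  have "x j = y j" if "\<bar>j\<bar> < 2 ^ K" for j
    using that pd_filled_eq_pd_add_pow2[of 0 K j] by (auto simp: x_def y_def pd_filled_def K_def)
  then have "dist_seq x y \<le> (1/2) ^ (2 ^ K)"
    by (intro dist_seq_le_if_agree) simp
  also have "\<dots> \<le> (1/2) ^ m"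
  proof (intro power_decreasing)
    have "m < 2 ^ m" by (rule less_exp)
    also have "(2::nat) ^ m \<le> 2 ^ K" unfolding K_def by (intro power_increasing) auto
    finally show "m \<le> 2 ^ K" by simp
  qed auto
  finally have "dist_prod (x, z) (y, z) < \<delta>"
    using m \<open>\<delta> > 0\<close> by (simp add: dist_prod_def dist_Z3_def)
  then have "dist_prod (Tpow (- (2 ^ K)) (x, z)) (Tpow (- (2 ^ K)) (y, z)) < 1"
    using stable \<open>(y, z) \<in> Xprod\<close> by blast
  moreover have "x (- (2 ^ K)) \<noteq> y (- (2 ^ K))"
    by (simp add: x_def y_def pd_filled_def pd_uminus pd_pow2 K_def)
  then have "dist_seq ((shift_inv ^^ 2 ^ K) x) ((shift_inv ^^ 2 ^ K) y) = 1"
    by (intro dist_seq_eq_1) (simp add: shift_inv_funpow)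
  ultimately show False
    by (simp add: Tpow_def Tinv_funpow nat_power_eq dist_prod_def)
qed

theorem mainTheorem12:
  shows "\<not> expansive Xprod dist_prod Tpow \<and> \<not> equicontinuous Xprod dist_prod Tpow"
  using not_expansive not_equicontinuous by blast

end
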